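(* Let $Z_1,\ldots,Z_{n+1}$ be i.i.d. from an arbitrary distribution $\mathcal P$, let $V$ be a fixed score function and $\alpha\in(0,1)$. Let $\tilde\alpha=A(Z_1,\ldots,Z_n,X_{n+1})\in[0,1]$, where $A$ is a fixed deterministic rule (the same for every input, invariant under permutations of its first $n$ arguments) such that for every input, with $\bar v^*:=Q(\tilde\alpha;\hat{\mathcal F})$, $$v^*_{i1}:=Q\Big(\tilde\alpha;\sum_{j=1}^n p^H_{i,j}\delta_{V_j}+p^H_{i,n+1}\delta_{\bar v^*}\Big),\qquad v^*_{i2}:=Q\Big(\tilde\alpha;\sum_{j=1}^n p^H_{i,j}\delta_{V_j}+p^H_{i,n+1}\delta_{0}\Big),$$ either $\bar v^*=\infty$ or $$\text{(G2)}\qquad \frac{1}{n+1}\sum_{i=1}^n\mathbb 1\{V_i\le v^*_{i1}\}\ge\alpha\quad\text{and}\quad \frac{1}{n+1}\sum_{i=1}^n\mathbb 1\{V_i\le v^*_{i2}\}+\frac{1}{n+1}\ge\alpha.$$ Then $\mathbb P\{V_{n+1}\le Q(\tilde\alpha;\hat{\mathcal F})\}\ge\alpha$.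
   Context: Data: $Z_i=(X_i,Y_i)\in\mathbb R^p\times\mathbb R$, $i=1,\ldots,n+1$; $X=\{X_1,\ldots,X_{n+1}\}$ (unordered). A localizer is a function $H(x_1,x_2,X)\in[0,1]$ of $x_1,x_2\in\mathbb R^p$ and of the unordered set $X$, satisfying $H(x,x,X)=1$ for all $x$. Write $H_{i,j}=H(X_i,X_j,X)$ and $p^H_{i,j}=H_{i,j}/\sum_{k=1}^{n+1}H_{i,k}$. For a probability distribution $\mathcal F$ on $\mathbb R\cup\{\infty\}$ and $a\in[0,1]$, $Q(a;\mathcal F)=\inf\{t:\mathbb P_{T\sim\mathcal F}(T\le t)\ge a\}$; $\delta_v$ denotes the point mass at $v$. A fixed score function is a deterministic measurable $V:\mathbb R^p\times\mathbb R\to[0,\infty)$ not depending on the data; $V_i=V(Z_i)$. Define $\hat{\mathcal F}=\sum_{j=1}^{n}p^H_{n+1,j}\delta_{V_j}+p^H_{n+1,n+1}\delta_{\infty}$ (note that $\hat{\mathcal F}$, $\bar v^*$, $v^*_{i1}$, $v^*_{i2}$ do not depend on $Y_{n+1}$). *)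

theory Defs
  imports "HOL-Probability.Probability" "HOL-Library.Multiset"
begin

text \<open>Data are indexed by \<open>i = 1..n+1\<close>; a data configuration is
  \<open>\<omega> :: nat \<Rightarrow> 'x \<times> real\<close> with \<open>Z_i = \<omega> i\<close>, \<open>X_i = fst (\<omega> i)\<close>.\<close>

definition Xset :: "nat \<Rightarrow> (nat \<Rightarrow> 'x \<times> real) \<Rightarrow> 'x multiset" where
  "Xset n \<omega> = image_mset (\<lambda>i. fst (\<omega> i)) (mset_set {1..n+1})"

text \<open>The training data \<open>Z_1,...,Z_n\<close> as a multiset (input of a
  permutation-invariant rule).\<close>
definition Ztrain :: "nat \<Rightarrow> (nat \<Rightarrow> 'x \<times> real) \<Rightarrow> ('x \<times> real) multiset" where
  "Ztrain n \<omega> = image_mset \<omega> (mset_set {1..n})"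

definition Hij :: "('x \<Rightarrow> 'x \<Rightarrow> 'x multiset \<Rightarrow> real) \<Rightarrow> nat \<Rightarrow> (nat \<Rightarrow> 'x \<times> real) \<Rightarrow> nat \<Rightarrow> nat \<Rightarrow> real" where
  "Hij H n \<omega> i j = H (fst (\<omega> i)) (fst (\<omega> j)) (Xset n \<omega>)"

definition pH :: "('x \<Rightarrow> 'x \<Rightarrow> 'x multiset \<Rightarrow> real) \<Rightarrow> nat \<Rightarrow> (nat \<Rightarrow> 'x \<times> real) \<Rightarrow> nat \<Rightarrow> nat \<Rightarrow> real" where
  "pH H n \<omega> i j = Hij H n \<omega> i j / (\<Sum>k\<in>{1..n+1}. Hij H n \<omega> i k)"

text \<open>Quantile \<open>Q(a; F) = inf {t : P_{T~F}(T \<le> t) \<ge> a}\<close> of the discrete distribution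
  \<open>F = \<Sum>_{k\<in>I} w k \<delta>_{v k}\<close> on \<open>\<real> \<union> {\<infinity>}\<close> (values taken in \<open>ereal\<close>).\<close>
definition quantile :: "real \<Rightarrow> 'i set \<Rightarrow> ('i \<Rightarrow> real) \<Rightarrow> ('i \<Rightarrow> ereal) \<Rightarrow> ereal" where
  "quantile a I w v = Inf {t :: ereal. a \<le> (\<Sum>k\<in>I. if v k \<le> t then w k else 0)}"

definition vbar :: "('x \<Rightarrow> 'x \<Rightarrow> 'x multiset \<Rightarrow> real) \<Rightarrow> ('x \<times> real \<Rightarrow> real) \<Rightarrow> nat
    \<Rightarrow> (nat \<Rightarrow> 'x \<times> real) \<Rightarrow> real \<Rightarrow> ereal" where
  "vbar H V n \<omega> a = quantile a {1..n+1} (pH H n \<omega> (n+1))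
      (\<lambda>j. if j = n+1 then \<infinity> else ereal (V (\<omega> j)))"

definition vstar :: "('x \<Rightarrow> 'x \<Rightarrow> 'x multiset \<Rightarrow> real) \<Rightarrow> ('x \<times> real \<Rightarrow> real) \<Rightarrow> nat
    \<Rightarrow> (nat \<Rightarrow> 'x \<times> real) \<Rightarrow> real \<Rightarrow> nat \<Rightarrow> ereal \<Rightarrow> ereal" where
  "vstar H V n \<omega> a i c = quantile a {1..n+1} (pH H n \<omega> i)
      (\<lambda>j. if j = n+1 then c else ereal (V (\<omega> j)))"

definition G2 :: "('x \<Rightarrow> 'x \<Rightarrow> 'x multiset \<Rightarrow> real) \<Rightarrow> ('x \<times> real \<Rightarrow> real) \<Rightarrow> nat
    \<Rightarrow> (nat \<Rightarrow> 'x \<times> real) \<Rightarrow> real \<Rightarrow> real \<Rightarrow> bool" where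
  "G2 H V n \<omega> a \<alpha> \<longleftrightarrow>
     (let vb = vbar H V n \<omega> a in
       1 / real (n+1) * (\<Sum>i\<in>{1..n}. if ereal (V (\<omega> i)) \<le> vstar H V n \<omega> a i vb then 1 else 0) \<ge> \<alpha>
     \<and> 1 / real (n+1) * (\<Sum>i\<in>{1..n}. if ereal (V (\<omega> i)) \<le> vstar H V n \<omega> a i 0 then 1 else 0)
         + 1 / real (n+1) \<ge> \<alpha>)"

end

theory Submission
  imports Defs "HOL-Combinatorics.Transposition"
begin

text \<open>Let \<open>L_i\<close> be the \<open>p^H_{i,\<cdot>}\<close>-mass of the scores lying strictly below \<open>V_i\<close>.
  Then \<open>V_{n+1} \<le> Q(\<tilde>\<alpha>; \<hat>F)\<close> exactly when \<open>L_{n+1} < \<tilde>\<alpha>\<close>, and whenever this fails,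
  the first half of (G2) exhibits at least \<open>\<alpha>(n+1)\<close> indices \<open>i\<close> with \<open>L_i < L_{n+1}\<close>.
  So the coverage event contains the event "fewer than \<open>\<alpha>(n+1)\<close> of the \<open>L_k\<close> lie below
  \<open>L_{n+1}\<close>". Since \<open>L\<close> is permutation equivariant and the sample is exchangeable, this
  event has the same probability for every index in place of \<open>n+1\<close>; and at every outcome at
  least \<open>\<alpha>(n+1)\<close> indices satisfy it. Averaging over the indices gives the bound \<open>\<alpha>\<close>.\<close>

lemma le_quantile_iff:
  fixes x :: ereal
  assumes fin: "finite I" and w: "\<And>k. k \<in> I \<Longrightarrow> 0 \<le> w k" and x: "x \<noteq> -\<infinity>"
  shows "x \<le> quantile a I w v \<longleftrightarrow> (\<Sum>k\<in>I. if v k < x then w k else 0) < a"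
proof
  assume le: "x \<le> quantile a I w v"
  show "(\<Sum>k\<in>I. if v k < x then w k else 0) < a"
  proof (rule ccontr)
    assume "\<not> ?thesis"
    hence a_le: "a \<le> (\<Sum>k\<in>I. if v k < x then w k else 0)" by simp
    define S where "S = insert (-\<infinity>) (v ` {k\<in>I. v k < x})"
    have fin_S: "finite S" using fin by (simp add: S_def)
    have "Max S < x"
      using fin_S x by (subst Max_less_iff) (auto simp: S_def)
    moreover have "(\<Sum>k\<in>I. if v k < x then w k else 0) \<le> (\<Sum>k\<in>I. if v k \<le> Max S then w k else 0)"
      using fin_S w by (intro sum_mono) (auto simp: S_def intro!: Max_ge)
    hence "quantile a I w v \<le> Max S"
      using a_le unfolding quantile_def by (intro Inf_lower) simp
    ultimately show False using le by simp
  qed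
next
  assume less: "(\<Sum>k\<in>I. if v k < x then w k else 0) < a"
  show "x \<le> quantile a I w v" unfolding quantile_def
  proof (rule Inf_greatest, rule ccontr)
    fix t assume t: "t \<in> {t. a \<le> (\<Sum>k\<in>I. if v k \<le> t then w k else 0)}" and "\<not> x \<le> t"
    hence "(\<Sum>k\<in>I. if v k \<le> t then w k else 0) \<le> (\<Sum>k\<in>I. if v k < x then w k else 0)"
      using w by (intro sum_mono) auto
    thus False using t less by simp
  qed
qed

text \<open>The indices outside the claimed set each have at least \<open>c\<close> predecessors; the
  predecessors of a minimal such index all lie in the claimed set.\<close>
lemma card_low_rank_ge:
  fixes L :: "'a \<Rightarrow> 'b::linorder" and c :: real
  assumes fin: "finite K" and c: "c \<le> real (card K)"
  shows "c \<le> real (card {i\<in>K. real (card {k\<in>K. L k < L i}) < c})"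
proof (cases "{i\<in>K. \<not> real (card {k\<in>K. L k < L i}) < c} = {}")
  case True
  hence "{i\<in>K. real (card {k\<in>K. L k < L i}) < c} = K" by auto
  thus ?thesis using c by simp
next
  case False
  define U where "U = {i\<in>K. \<not> real (card {k\<in>K. L k < L i}) < c}"
  have fin_LU: "finite (L ` U)" and "L ` U \<noteq> {}" using fin False by (auto simp: U_def)
  hence "Min (L ` U) \<in> L ` U" by (rule Min_in)
  then obtain i0 where i0: "i0 \<in> U" and "L i0 = Min (L ` U)" by auto
  hence min: "\<And>i. i \<in> U \<Longrightarrow> L i0 \<le> L i" using fin_LU by simp
  have "{k\<in>K. L k < L i0} \<subseteq> {i\<in>K. real (card {k\<in>K. L k < L i}) < c}"
  proof
    fix k assume k: "k \<in> {k\<in>K. L k < L i0}"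
    hence "k \<notin> U" using min leD by blast
    thus "k \<in> {i\<in>K. real (card {k\<in>K. L k < L i}) < c}"
      using k by (simp add: U_def)
  qed
  hence "card {k\<in>K. L k < L i0} \<le> card {i\<in>K. real (card {k\<in>K. L k < L i}) < c}"
    using fin by (intro card_mono) auto
  moreover have "c \<le> real (card {k\<in>K. L k < L i0})" using i0 by (simp add: U_def)
  ultimately show ?thesis by linarith
qed

lemma (in prob_space) card_mult_prob_ge:
  fixes C :: "'i \<Rightarrow> 'a set"
  assumes fin: "finite I" and C: "\<And>i. i \<in> I \<Longrightarrow> C i \<in> events"
    and same: "\<And>i. i \<in> I \<Longrightarrow> prob (C i) = p"
    and count: "\<And>x. x \<in> space M \<Longrightarrow> c \<le> real (card {i\<in>I. x \<in> C i})"
  shows "c \<le> real (card I) * p"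
proof -
  have int: "\<And>i. i \<in> I \<Longrightarrow> integrable M (indicator (C i) :: _ \<Rightarrow> real)"
    using C by (auto simp: emeasure_eq_measure)
  have "\<And>x. (\<Sum>i\<in>I. indicator (C i) x :: real) = real (card {i\<in>I. x \<in> C i})"
    using fin by (simp add: indicator_def sum.If_cases Int_def)
  hence "c \<le> (\<integral>x. (\<Sum>i\<in>I. indicator (C i) x) \<partial>M)"
    using count int by (intro integral_ge_const AE_I2 Bochner_Integration.integrable_sum) auto
  also have "\<dots> = (\<Sum>i\<in>I. prob (C i))"
    using int C by (simp add: Bochner_Integration.integral_sum)
  also have "\<dots> = real (card I) * p"
    using same by simp
  finally show ?thesis .
qed

text \<open>Reindexing the coordinates by the transposition of \<open>i\<close> and \<open>j\<close> preserves the
  product measure and maps the \<open>j\<close>-event onto the \<open>i\<close>-event.\<close>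
lemma measure_PiM_equivariant_eq:
  fixes P :: "'a measure" and I :: "'i set" and g :: "('i \<Rightarrow> 'a) \<Rightarrow> 'i \<Rightarrow> bool"
  defines "M \<equiv> PiM I (\<lambda>_. P)"
  assumes P: "prob_space P" and i: "i \<in> I" and j: "j \<in> I"
    and equivariant: "\<And>\<tau> \<omega> k. bij_betw \<tau> I I \<Longrightarrow> k \<in> I \<Longrightarrow> g (\<lambda>k\<in>I. \<omega> (\<tau> k)) k = g \<omega> (\<tau> k)"
    and meas: "{\<omega> \<in> space M. g \<omega> j} \<in> sets M"
  shows "measure M {\<omega> \<in> space M. g \<omega> i} = measure M {\<omega> \<in> space M. g \<omega> j}"
proof -
  define \<tau> where "\<tau> = Transposition.transpose i j"
  have bij: "bij_betw \<tau> I I" using i j by (simp add: \<tau>_def)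
  define f where "f \<omega> = (\<lambda>k\<in>I. \<omega> (\<tau> k))" for \<omega> :: "'i \<Rightarrow> 'a"
  have \<tau>_I: "\<tau> \<in> I \<rightarrow> I" using bij bij_betwE by blast
  have f_meas: "f \<in> measurable M M"
    unfolding f_def M_def using \<tau>_I
    by (intro measurable_restrict measurable_component_singleton) blast
  have "distr M M f = M"
    unfolding M_def f_def using distr_PiM_reindex[of I "\<lambda>_. P" \<tau> I] P bij \<tau>_I
    by (simp add: bij_betw_def)
  hence "measure M {\<omega> \<in> space M. g \<omega> j} = measure M (f -` {\<omega> \<in> space M. g \<omega> j} \<inter> space M)"
    using measure_distr[OF f_meas meas] by simp
  also have "f -` {\<omega> \<in> space M. g \<omega> j} \<inter> space M = {\<omega> \<in> space M. g \<omega> i}"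
  proof -
    have "g (f \<omega>) j = g \<omega> i" for \<omega>
      using equivariant[OF bij j, of \<omega>] by (simp add: f_def \<tau>_def)
    thus ?thesis using measurable_space[OF f_meas] by blast
  qed
  finally show ?thesis by (rule sym)
qed

definition lower_mass :: "('x \<Rightarrow> 'x \<Rightarrow> 'x multiset \<Rightarrow> real) \<Rightarrow> ('x \<times> real \<Rightarrow> real) \<Rightarrow> nat
    \<Rightarrow> (nat \<Rightarrow> 'x \<times> real) \<Rightarrow> nat \<Rightarrow> real" where
  "lower_mass H V n \<omega> i = (\<Sum>j\<in>{1..n+1}. if V (\<omega> j) < V (\<omega> i) then pH H n \<omega> i j else 0)"

definition lower_count :: "('x \<Rightarrow> 'x \<Rightarrow> 'x multiset \<Rightarrow> real) \<Rightarrow> ('x \<times> real \<Rightarrow> real) \<Rightarrow> nat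
    \<Rightarrow> (nat \<Rightarrow> 'x \<times> real) \<Rightarrow> nat \<Rightarrow> nat" where
  "lower_count H V n \<omega> i = card {k\<in>{1..n+1}. lower_mass H V n \<omega> k < lower_mass H V n \<omega> i}"

lemma pH_nonneg:
  assumes "\<And>x1 x2 X. 0 \<le> H x1 x2 X"
  shows "0 \<le> pH H n \<omega> i j"
  unfolding pH_def Hij_def using assms by (intro divide_nonneg_nonneg sum_nonneg) auto

lemma Xset_permute:
  assumes bij: "bij_betw \<tau> {1..n+1} {1..n+1}"
    and \<omega>': "\<And>k. k \<in> {1..n+1} \<Longrightarrow> \<omega>' k = \<omega> (\<tau> k)"
  shows "Xset n \<omega>' = Xset n \<omega>"
proof -
  have "Xset n \<omega>' = image_mset (\<lambda>i. fst (\<omega> i)) (image_mset \<tau> (mset_set {1..n+1}))"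
    unfolding Xset_def multiset.map_comp comp_def by (intro image_mset_cong) (simp add: \<omega>')
  also have "image_mset \<tau> (mset_set {1..n+1}) = mset_set {1..n+1}"
    using bij by (simp add: image_mset_mset_set bij_betw_def)
  finally show ?thesis unfolding Xset_def .
qed

lemma pH_permute:
  assumes bij: "bij_betw \<tau> {1..n+1} {1..n+1}"
    and \<omega>': "\<And>k. k \<in> {1..n+1} \<Longrightarrow> \<omega>' k = \<omega> (\<tau> k)"
    and i: "i \<in> {1..n+1}" and j: "j \<in> {1..n+1}"
  shows "pH H n \<omega>' i j = pH H n \<omega> (\<tau> i) (\<tau> j)"
proof -
  have H: "\<And>a b. a \<in> {1..n+1} \<Longrightarrow> b \<in> {1..n+1} \<Longrightarrow> Hij H n \<omega>' a b = Hij H n \<omega> (\<tau> a) (\<tau> b)"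
    unfolding Hij_def using Xset_permute[where \<omega>'=\<omega>' and \<omega>=\<omega>, OF bij \<omega>'] \<omega>' by simp
  have "(\<Sum>k\<in>{1..n+1}. Hij H n \<omega>' i k) = (\<Sum>k\<in>{1..n+1}. Hij H n \<omega> (\<tau> i) (\<tau> k))"
    using H i by (intro sum.cong) auto
  also have "\<dots> = (\<Sum>k\<in>{1..n+1}. Hij H n \<omega> (\<tau> i) k)"
    by (rule sum.reindex_bij_betw[OF bij])
  finally show ?thesis unfolding pH_def using H i j by simp
qed

lemma lower_mass_permute:
  assumes bij: "bij_betw \<tau> {1..n+1} {1..n+1}"
    and \<omega>': "\<And>k. k \<in> {1..n+1} \<Longrightarrow> \<omega>' k = \<omega> (\<tau> k)"
    and i: "i \<in> {1..n+1}"
  shows "lower_mass H V n \<omega>' i = lower_mass H V n \<omega> (\<tau> i)"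
proof -
  have "lower_mass H V n \<omega>' i
      = (\<Sum>j\<in>{1..n+1}. if V (\<omega> (\<tau> j)) < V (\<omega> (\<tau> i)) then pH H n \<omega> (\<tau> i) (\<tau> j) else 0)"
    unfolding lower_mass_def using pH_permute[where \<omega>'=\<omega>' and \<omega>=\<omega> and H=H, OF bij \<omega>' i] \<omega>' i by (intro sum.cong) auto
  also have "\<dots> = lower_mass H V n \<omega> (\<tau> i)"
    unfolding lower_mass_def
    by (rule sum.reindex_bij_betw[OF bij, where g="\<lambda>j. if V (\<omega> j) < V (\<omega> (\<tau> i)) then pH H n \<omega> (\<tau> i) j else 0"])
  finally show ?thesis .
qed

lemma lower_count_permute:
  assumes bij: "bij_betw \<tau> {1..n+1} {1..n+1}"
    and \<omega>': "\<And>k. k \<in> {1..n+1} \<Longrightarrow> \<omega>' k = \<omega> (\<tau> k)"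
    and i: "i \<in> {1..n+1}"
  shows "lower_count H V n \<omega>' i = lower_count H V n \<omega> (\<tau> i)"
proof -
  let ?L = "lower_mass H V n \<omega>"
  have L': "\<And>k. k \<in> {1..n+1} \<Longrightarrow> lower_mass H V n \<omega>' k = ?L (\<tau> k)"
    by (rule lower_mass_permute[where \<omega>'=\<omega>' and \<omega>=\<omega>, OF bij \<omega>'])
  have "bij_betw \<tau> {k\<in>{1..n+1}. lower_mass H V n \<omega>' k < lower_mass H V n \<omega>' i}
                   {k\<in>{1..n+1}. ?L k < ?L (\<tau> i)}"
    by (rule bij_betw_Collect[OF bij]) (simp add: L' L'[OF i])
  thus ?thesis
    unfolding lower_count_def by (rule bij_betw_same_card)
qed

lemma lower_mass_measurable:
  assumes V: "\<And>j. j \<in> {1..n+1} \<Longrightarrow> (\<lambda>\<omega>. V (\<omega> j)) \<in> borel_measurable M"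
    and H: "\<And>i j. i \<in> {1..n+1} \<Longrightarrow> j \<in> {1..n+1} \<Longrightarrow> (\<lambda>\<omega>. Hij H n \<omega> i j) \<in> borel_measurable M"
    and i: "i \<in> {1..n+1}"
  shows "(\<lambda>\<omega>. lower_mass H V n \<omega> i) \<in> borel_measurable M"
  unfolding lower_mass_def
proof (intro borel_measurable_sum)
  fix j assume j: "j \<in> {1..n+1}"
  have [measurable]: "(\<lambda>\<omega>. pH H n \<omega> i j) \<in> borel_measurable M"
    unfolding pH_def using H i j by (intro borel_measurable_divide borel_measurable_sum) auto
  note [measurable] = V[OF i] V[OF j]
  show "(\<lambda>\<omega>. if V (\<omega> j) < V (\<omega> i) then pH H n \<omega> i j else 0) \<in> borel_measurable M"
    by measurable
qed

lemma lower_count_measurable: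
  assumes V: "\<And>j. j \<in> {1..n+1} \<Longrightarrow> (\<lambda>\<omega>. V (\<omega> j)) \<in> borel_measurable M"
    and H: "\<And>i j. i \<in> {1..n+1} \<Longrightarrow> j \<in> {1..n+1} \<Longrightarrow> (\<lambda>\<omega>. Hij H n \<omega> i j) \<in> borel_measurable M"
    and i: "i \<in> {1..n+1}"
  shows "(\<lambda>\<omega>. real (lower_count H V n \<omega> i)) \<in> borel_measurable M"
proof -
  have card_sum: "real (card {k\<in>A. Q k}) = (\<Sum>k\<in>A. if Q k then 1 else 0)"
    if "finite A" for A :: "nat set" and Q
    using that by (simp add: sum.If_cases Int_def)
  have "(\<lambda>\<omega>. real (lower_count H V n \<omega> i))
      = (\<lambda>\<omega>. \<Sum>k\<in>{1..n+1}. if lower_mass H V n \<omega> k < lower_mass H V n \<omega> i then 1 else 0)"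
    unfolding lower_count_def by (intro ext card_sum) simp
  also have "\<dots> \<in> borel_measurable M"
  proof (intro borel_measurable_sum)
    fix k assume k: "k \<in> {1..n+1}"
    note [measurable] = lower_mass_measurable[OF V H i] lower_mass_measurable[OF V H k]
    show "(\<lambda>\<omega>. if lower_mass H V n \<omega> k < lower_mass H V n \<omega> i then 1 else 0::real) \<in> borel_measurable M"
      by measurable
  qed
  finally show ?thesis .
qed

lemma le_vbar_iff:
  assumes "\<And>x1 x2 X. 0 \<le> H x1 x2 X"
  shows "ereal (V (\<omega> (n+1))) \<le> vbar H V n \<omega> a \<longleftrightarrow> lower_mass H V n \<omega> (n+1) < a"
  unfolding vbar_def using assms
  by (subst le_quantile_iff) (auto simp: pH_nonneg lower_mass_def intro!: sum.cong arg_cong2[where f="(<)"])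

lemma lower_mass_less_if_le_vstar:
  assumes H: "\<And>x1 x2 X. 0 \<le> H x1 x2 X"
    and miss: "vbar H V n \<omega> a < ereal (V (\<omega> (n+1)))"
    and le: "ereal (V (\<omega> i)) \<le> vstar H V n \<omega> a i (vbar H V n \<omega> a)"
  shows "lower_mass H V n \<omega> i < lower_mass H V n \<omega> (n+1)"
proof -
  define vb where "vb = vbar H V n \<omega> a"
  let ?v = "\<lambda>j. if j = n+1 then vb else ereal (V (\<omega> j))"
  have "?v j < ereal (V (\<omega> i))" if "V (\<omega> j) < V (\<omega> i)" for j
    using that less_trans[OF miss] by (cases "j = n+1") (simp_all add: vb_def)
  hence "lower_mass H V n \<omega> i \<le> (\<Sum>j\<in>{1..n+1}. if ?v j < ereal (V (\<omega> i)) then pH H n \<omega> i j else 0)"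
    unfolding lower_mass_def using pH_nonneg[of H, OF H] by (intro sum_mono) auto
  also have "\<dots> < a"
    using le H unfolding vstar_def vb_def by (subst (asm) le_quantile_iff) (auto simp: pH_nonneg)
  also have "a \<le> lower_mass H V n \<omega> (n+1)"
    using miss le_vbar_iff[where H=H, OF H] by (meson not_le)
  finally show ?thesis .
qed

lemma lower_count_ge_if_G2_uncovered:
  assumes H: "\<And>x1 x2 X. 0 \<le> H x1 x2 X"
    and G2: "G2 H V n \<omega> a \<alpha>"
    and miss: "vbar H V n \<omega> a < ereal (V (\<omega> (n+1)))"
  shows "\<alpha> * real (n+1) \<le> real (lower_count H V n \<omega> (n+1))"
proof -
  let ?good = "{i\<in>{1..n}. ereal (V (\<omega> i)) \<le> vstar H V n \<omega> a i (vbar H V n \<omega> a)}"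
  have "\<alpha> \<le> real (card ?good) / real (n+1)"
    using G2 unfolding G2_def Let_def by (simp add: sum.If_cases Int_def)
  hence "\<alpha> * real (n+1) \<le> real (card ?good)"
    by (simp add: field_simps)
  also have "card ?good \<le> lower_count H V n \<omega> (n+1)"
    unfolding lower_count_def
    using lower_mass_less_if_le_vstar[where H=H, OF H miss] by (intro card_mono) auto
  finally show ?thesis by simp
qed

lemma le_vbar_if_lower_count_less:
  assumes H: "\<And>x1 x2 X. 0 \<le> H x1 x2 X"
    and cond: "vbar H V n \<omega> a = \<infinity> \<or> G2 H V n \<omega> a \<alpha>"
    and less: "real (lower_count H V n \<omega> (n+1)) < \<alpha> * real (n+1)"
  shows "ereal (V (\<omega> (n+1))) \<le> vbar H V n \<omega> a"
proof (rule ccontr)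
  assume "\<not> ?thesis"
  hence miss: "vbar H V n \<omega> a < ereal (V (\<omega> (n+1)))" by simp
  hence "G2 H V n \<omega> a \<alpha>" using cond by force
  from lower_count_ge_if_G2_uncovered[where H=H, OF H this miss] show False
    using less by simp
qed

lemma measure_lower_count_less_eq:
  fixes P :: "('x \<times> real) measure" and n :: nat
  defines "M \<equiv> PiM {1..n+1} (\<lambda>_. P)"
  assumes P: "prob_space P" and i: "i \<in> {1..n+1}" and j: "j \<in> {1..n+1}"
    and meas: "{\<omega> \<in> space M. real (lower_count H V n \<omega> j) < c} \<in> sets M"
  shows "measure M {\<omega> \<in> space M. real (lower_count H V n \<omega> i) < c}
       = measure M {\<omega> \<in> space M. real (lower_count H V n \<omega> j) < c}"
  unfolding M_def
proof (rule measure_PiM_equivariant_eq[where g="\<lambda>\<omega> k. real (lower_count H V n \<omega> k) < c", OF P i j])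
  fix \<tau> \<omega> k assume "bij_betw \<tau> {1..n+1} {1..n+1}" and "k \<in> {1..n+1}"
  thus "(real (lower_count H V n (\<lambda>k\<in>{1..n+1}. \<omega> (\<tau> k)) k) < c)
      = (real (lower_count H V n \<omega> (\<tau> k)) < c)"
    by (subst lower_count_permute[where \<omega>=\<omega>]) auto
qed (use meas in \<open>simp add: M_def\<close>)

theorem theorem1:
  fixes P :: "('x::euclidean_space \<times> real) measure"
    and V :: "'x \<times> real \<Rightarrow> real"
    and H :: "'x \<Rightarrow> 'x \<Rightarrow> 'x multiset \<Rightarrow> real"
    and A :: "('x \<times> real) multiset \<Rightarrow> 'x \<Rightarrow> real"
    and n :: nat and \<alpha> :: real
  defines "M \<equiv> PiM {1..n+1} (\<lambda>_. P)"
  defines "atil \<equiv> (\<lambda>\<omega>. A (Ztrain n \<omega>) (fst (\<omega> (n+1))))"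
  assumes P: "prob_space P" and sets_P: "sets P = sets borel"
    and V_meas: "V \<in> borel_measurable borel" and V_nonneg: "\<And>z. V z \<ge> 0"
    and H_range: "\<And>x1 x2 X. 0 \<le> H x1 x2 X \<and> H x1 x2 X \<le> 1"
    and H_diag: "\<And>x X. H x x X = 1"
    and H_meas: "\<And>i j. i \<in> {1..n+1} \<Longrightarrow> j \<in> {1..n+1} \<Longrightarrow>
                   (\<lambda>\<omega>. Hij H n \<omega> i j) \<in> borel_measurable M"
    and alpha: "0 < \<alpha>" "\<alpha> < 1"
    and A_range: "\<And>D x. 0 \<le> A D x \<and> A D x \<le> 1"
    and A_meas: "atil \<in> borel_measurable M"
    and A_cond: "\<And>\<omega>. vbar H V n \<omega> (atil \<omega>) = \<infinity> \<or> G2 H V n \<omega> (atil \<omega>) \<alpha>"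
  shows "\<alpha> \<le> measure M {\<omega> \<in> space M. ereal (V (\<omega> (n+1))) \<le> vbar H V n \<omega> (atil \<omega>)}"
proof -
  interpret M: prob_space M unfolding M_def by (intro prob_space_PiM P)
  have H_nonneg: "\<And>x1 x2 X. 0 \<le> H x1 x2 X" using H_range by blast
  have V_comp: "\<And>j. j \<in> {1..n+1} \<Longrightarrow> (\<lambda>\<omega>. V (\<omega> j)) \<in> borel_measurable M"
    unfolding M_def using V_meas measurable_cong_sets[OF sets_P refl]
    by (intro measurable_compose[OF measurable_component_singleton]) auto
  define C where "C i = {\<omega> \<in> space M. real (lower_count H V n \<omega> i) < \<alpha> * real (n+1)}" for i
  have C_events: "\<And>i. i \<in> {1..n+1} \<Longrightarrow> C i \<in> M.events"
    using lower_count_measurable[OF V_comp H_meas] unfolding C_def by measurable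
  have same_prob: "\<And>i. i \<in> {1..n+1} \<Longrightarrow> M.prob (C i) = M.prob (C (n+1))"
    unfolding C_def M_def using C_events[of "n+1"]
    by (intro measure_lower_count_less_eq P) (simp_all add: C_def M_def)
  have count: "\<alpha> * real (n+1) \<le> real (card {i\<in>{1..n+1}. \<omega> \<in> C i})" if "\<omega> \<in> space M" for \<omega>
    using card_low_rank_ge[of "{1..n+1}" "\<alpha> * real (n+1)" "lower_mass H V n \<omega>"] alpha that
    by (simp add: C_def lower_count_def)
  have "\<alpha> * real (n+1) \<le> real (card {1..n+1}) * M.prob (C (n+1))"
    by (rule M.card_mult_prob_ge[OF finite_atLeastAtMost C_events same_prob count])
  hence "\<alpha> \<le> M.prob (C (n+1))"
    by (simp add: mult.commute)
  also have "\<dots> \<le> M.prob {\<omega> \<in> space M. ereal (V (\<omega> (n+1))) \<le> vbar H V n \<omega> (atil \<omega>)}"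
  proof (rule M.finite_measure_mono)
    show "C (n+1) \<subseteq> {\<omega> \<in> space M. ereal (V (\<omega> (n+1))) \<le> vbar H V n \<omega> (atil \<omega>)}"
      using le_vbar_if_lower_count_less[where H=H, OF H_nonneg A_cond] by (auto simp: C_def)
    show "{\<omega> \<in> space M. ereal (V (\<omega> (n+1))) \<le> vbar H V n \<omega> (atil \<omega>)} \<in> M.events"
      unfolding le_vbar_iff[where H=H, OF H_nonneg]
      using lower_mass_measurable[OF V_comp H_meas, of "n+1"] A_meas by measurable
  qed
  finally show ?thesis .
qed

end
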